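(* Let $\alpha,\mu,\gamma>0$ and consider on the simplex $\Sigma=\{(L,R)\in\mathbb{R}^2: L\ge 0,\ R\ge 0,\ L+R\le 1\}$ the system \[ \dot L=\alpha L C-\mu L+\gamma R C,\qquad \dot R=\alpha R C-\mu R+\gamma L C,\qquad C=1-L-R. \] Set $\beta=\alpha+\gamma$. Then: (1) If $\beta\le\mu$, the equilibrium $E_0=(0,0)$ is globally asymptotically stable on $\Sigma$; in particular $L(t),R(t)\to 0$ and $C(t)\to 1$ for every solution starting in $\Sigma$. (2) If $\beta>\mu$, the point $E_1=(P^*,P^* )$ with $P^*=\tfrac12(1-\mu/\beta)$ (so that $C^*=1-2P^*=\mu/\beta$) is the unique interior equilibrium, it is globally asymptotically stable on $\Sigma\setminus\{E_0\}$, and $E_0$ is unstable. *)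

theory Defs
  imports "HOL-Analysis.Analysis"
begin

definition vf :: "real \<Rightarrow> real \<Rightarrow> real \<Rightarrow> real \<times> real \<Rightarrow> real \<times> real" where
  "vf \<alpha> \<mu> \<gamma> p = (let L = fst p; R = snd p; C = 1 - L - R in
      (\<alpha> * L * C - \<mu> * L + \<gamma> * R * C, \<alpha> * R * C - \<mu> * R + \<gamma> * L * C))"

definition Sigma_simplex :: "(real \<times> real) set" where
  "Sigma_simplex = {(L, R). L \<ge> 0 \<and> R \<ge> 0 \<and> L + R \<le> 1}"

definition is_solution :: "real \<Rightarrow> real \<Rightarrow> real \<Rightarrow> (real \<Rightarrow> real \<times> real) \<Rightarrow> bool" where
  "is_solution \<alpha> \<mu> \<gamma> x \<longleftrightarrow>
     (\<forall>t\<ge>0. (x has_vector_derivative vf \<alpha> \<mu> \<gamma> (x t)) (at t within {0..}))"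

definition stable_on :: "real \<Rightarrow> real \<Rightarrow> real \<Rightarrow> (real \<times> real) set \<Rightarrow> real \<times> real \<Rightarrow> bool" where
  "stable_on \<alpha> \<mu> \<gamma> S e \<longleftrightarrow>
     (\<forall>\<epsilon>>0. \<exists>\<delta>>0. \<forall>x. is_solution \<alpha> \<mu> \<gamma> x \<and> x 0 \<in> S \<and> dist (x 0) e < \<delta>
        \<longrightarrow> (\<forall>t\<ge>0. dist (x t) e < \<epsilon>))"

definition attractive_on :: "real \<Rightarrow> real \<Rightarrow> real \<Rightarrow> (real \<times> real) set \<Rightarrow> real \<times> real \<Rightarrow> bool" where
  "attractive_on \<alpha> \<mu> \<gamma> S e \<longleftrightarrow>
     (\<forall>x. is_solution \<alpha> \<mu> \<gamma> x \<and> x 0 \<in> S \<longrightarrow> (x \<longlongrightarrow> e) at_top)"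

definition GAS_on :: "real \<Rightarrow> real \<Rightarrow> real \<Rightarrow> (real \<times> real) set \<Rightarrow> real \<times> real \<Rightarrow> bool" where
  "GAS_on \<alpha> \<mu> \<gamma> S e \<longleftrightarrow>
     vf \<alpha> \<mu> \<gamma> e = 0 \<and> stable_on \<alpha> \<mu> \<gamma> S e \<and> attractive_on \<alpha> \<mu> \<gamma> S e"

end

theory Submission
  imports Defs
begin

(* With S = L + R and D = L - R the system decouples into
     S' = S (kappa - beta S)   and   D' = D ((alpha - gamma) (1 - S) - mu),   kappa = beta - mu.
   Thus 1/S solves the linear equation (1/S)' = beta - kappa / S, and q = D/S solves
   q' = -2 gamma (1 - S) q, so |q| never increases: the simplex is invariant.  If kappa <= 0,
   1/S grows at least linearly and S decreases to 0.  If kappa > 0, S tends to kappa/beta = 2P,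
   and q (hence D) decays exponentially once S stays below 1; both |S - 2P| and |D| are bounded
   by their initial values divided by S 0, which gives stability of (P, P).  The origin is then
   unstable because the diagonal solutions, explicit logistic curves, start arbitrarily close to
   it and converge to (P, P). *)

lemma has_real_derivative_ge_imp_ge:
  fixes f f' :: "real \<Rightarrow> real"
  assumes f': "\<And>s. s \<ge> a \<Longrightarrow> (f has_real_derivative f' s) (at s within {a..})"
    and ge: "\<And>s. s \<ge> a \<Longrightarrow> f' s \<ge> c" and "b \<ge> a"
  shows "f b \<ge> f a + c * (b - a)"
proof -
  have der: "(f has_derivative (*) (f' s)) (at s within {a..b})" if "a \<le> s" "s \<le> b" for s
    using has_field_derivative_subset[OF f'[OF that(1)], of "{a..b}"]
    unfolding has_field_derivative_def by auto
  obtain \<xi> where "\<xi> \<in> {a..b}" and \<xi>: "f b - f a = f' \<xi> * (b - a)"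
    using mvt_very_simple[OF \<open>b \<ge> a\<close> der] by auto
  have "c * (b - a) \<le> f' \<xi> * (b - a)"
    using ge \<open>\<xi> \<in> {a..b}\<close> \<open>b \<ge> a\<close> by (intro mult_right_mono) auto
  with \<xi> show ?thesis by linarith
qed

lemma affine_ode_nonneg:
  fixes f g :: "real \<Rightarrow> real"
  assumes f': "\<And>s. s \<ge> a \<Longrightarrow> (f has_real_derivative g s - c * f s) (at s within {a..})"
    and g: "\<And>s. s \<ge> a \<Longrightarrow> g s \<ge> 0" and "f a \<ge> 0" and "t \<ge> a"
  shows "f t \<ge> 0"
proof -
  let ?e = "\<lambda>s. exp (c * (s - a))"
  have "f t * ?e t \<ge> f a * ?e a + 0 * (t - a)"
  proof (rule has_real_derivative_ge_imp_ge)
    fix s assume "s \<ge> a"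
    have "(?e has_real_derivative ?e s * c) (at s within {a..})"
      by (auto intro!: derivative_eq_intros)
    from DERIV_mult[OF f'[OF \<open>s \<ge> a\<close>] this]
    show "((\<lambda>s. f s * ?e s) has_real_derivative g s * ?e s) (at s within {a..})"
      by (simp add: algebra_simps)
    show "g s * ?e s \<ge> 0" using g[OF \<open>s \<ge> a\<close>] by simp
  qed fact
  with \<open>f a \<ge> 0\<close> have "f t * ?e t \<ge> 0" by simp
  then show ?thesis by (simp add: zero_le_mult_iff)
qed

lemma linear_ode_exp_integral:
  fixes f h :: "real \<Rightarrow> real"
  assumes f': "\<And>s. s \<ge> a \<Longrightarrow> (f has_real_derivative f s * h s) (at s within {a..})"
    and h: "continuous_on {a..} h" and "t \<ge> a"
  shows "f t = f a * exp (integral {a..t} h)"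
proof -
  let ?H = "\<lambda>u. integral {a..u} h"
  have "\<exists>k. \<forall>u\<in>{a..t}. f u * exp (- ?H u) = k"
  proof (rule has_field_derivative_zero_constant)
    fix u assume u: "u \<in> {a..t}"
    have H': "(?H has_real_derivative h u) (at u within {a..t})"
      using integral_has_real_derivative[of a t h u] continuous_on_subset[OF h] u by auto
    have f'u: "(f has_real_derivative f u * h u) (at u within {a..t})"
      using f'[of u] u by (auto intro: has_field_derivative_subset)
    show "((\<lambda>u. f u * exp (- ?H u)) has_field_derivative 0) (at u within {a..t})"
      by (rule derivative_eq_intros f'u H' refl | simp add: algebra_simps)+
  qed simp
  then have "f t * exp (- ?H t) = f a" using \<open>t \<ge> a\<close> by force
  then show ?thesis by (simp add: exp_minus field_simps)
qed

lemma integral_le_const_times_length: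
  fixes h :: "real \<Rightarrow> real"
  assumes "continuous_on {a..} h" and "\<And>s. s \<ge> a \<Longrightarrow> h s \<le> c" and "t \<ge> a"
  shows "integral {a..t} h \<le> c * (t - a)"
proof -
  have "integral {a..t} h \<le> integral {a..t} (\<lambda>_. c)"
    using assms integrable_continuous_interval[OF continuous_on_subset[OF assms(1)]]
    by (intro integral_le) auto
  with \<open>t \<ge> a\<close> show ?thesis by (simp add: mult.commute)
qed

lemma linear_ode_abs_le:
  fixes f h :: "real \<Rightarrow> real"
  assumes f': "\<And>s. s \<ge> a \<Longrightarrow> (f has_real_derivative f s * h s) (at s within {a..})"
    and h: "continuous_on {a..} h" and "\<And>s. s \<ge> a \<Longrightarrow> h s \<le> 0" and "t \<ge> a"
  shows "\<bar>f t\<bar> \<le> \<bar>f a\<bar>"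
proof -
  have "integral {a..t} h \<le> 0"
    using integral_le_const_times_length[OF h, of 0] assms by simp
  then show ?thesis
    using linear_ode_exp_integral[OF f' h \<open>t \<ge> a\<close>] by (simp add: abs_mult mult_left_le)
qed

lemma linear_ode_tendsto_0:
  fixes f h :: "real \<Rightarrow> real"
  assumes f': "\<And>s. s \<ge> a \<Longrightarrow> (f has_real_derivative f s * h s) (at s within {a..})"
    and h: "continuous_on {a..} h" and "c > 0" and "eventually (\<lambda>s. h s \<le> - c) at_top"
  shows "(f \<longlongrightarrow> 0) at_top"
proof -
  obtain T where "T \<ge> a" and T: "\<And>s. s \<ge> T \<Longrightarrow> h s \<le> - c"
    using \<open>eventually _ at_top\<close> unfolding eventually_at_top_linorder
    by (metis max.cobounded1 max.cobounded2 order.trans)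
  have f'T: "(f has_real_derivative f s * h s) (at s within {T..})" if "s \<ge> T" for s
    using f'[of s] that \<open>T \<ge> a\<close> by (auto intro: has_field_derivative_subset)
  have hT: "continuous_on {T..} h"
    using continuous_on_subset[OF h] \<open>T \<ge> a\<close> by auto
  have "\<bar>f t\<bar> \<le> \<bar>f T\<bar> * exp (- c * (t - T))" if "t \<ge> T" for t
  proof -
    have "integral {T..t} h \<le> - c * (t - T)"
      using integral_le_const_times_length[OF hT, of "- c"] T that by simp
    then show ?thesis
      using linear_ode_exp_integral[OF f'T hT that] by (simp add: abs_mult mult_left_mono)
  qed
  then have "eventually (\<lambda>t. norm (f t) \<le> \<bar>f T\<bar> * exp (- c * (t - T))) at_top"
    by (auto simp: eventually_at_top_linorder)
  moreover have "((\<lambda>t. exp (- c * (t - T))) \<longlongrightarrow> 0) at_top"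
    using \<open>c > 0\<close>
    by (intro filterlim_compose[OF exp_at_bot] filterlim_tendsto_neg_mult_at_bot[OF tendsto_const]
        filterlim_tendsto_add_at_top[OF tendsto_const filterlim_ident, of "- T", simplified]) auto
  then have "((\<lambda>t. \<bar>f T\<bar> * exp (- c * (t - T))) \<longlongrightarrow> 0) at_top"
    by (simp add: tendsto_mult_right_zero)
  ultimately show ?thesis by (rule Lim_null_comparison)
qed

lemma has_real_derivative_fst:
  "(x has_vector_derivative v) F \<Longrightarrow> ((\<lambda>t. fst (x t)) has_real_derivative fst v) F"
  unfolding has_vector_derivative_def has_field_derivative_def
  by (drule has_derivative_fst) (simp add: mult_commute_abs)

lemma has_real_derivative_snd:
  "(x has_vector_derivative v) F \<Longrightarrow> ((\<lambda>t. snd (x t)) has_real_derivative snd v) F"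
  unfolding has_vector_derivative_def has_field_derivative_def
  by (drule has_derivative_snd) (simp add: mult_commute_abs)

lemma dist_Pair_diagonal_le: "dist (l, r) (p, p) \<le> \<bar>l + r - 2 * p\<bar> + \<bar>l - r\<bar>"
proof -
  have "dist (l, r) (p, p) \<le> \<bar>l - p\<bar> + \<bar>r - p\<bar>"
    using norm_Pair_le[of "l - p" "r - p"] by (simp add: dist_norm)
  then show ?thesis by (simp add: abs_if split: if_splits)
qed

lemma sum_diff_le_dist_Pair_diagonal: "\<bar>l + r - 2 * p\<bar> + \<bar>l - r\<bar> \<le> 4 * dist (l, r) (p, p)"
proof -
  have "\<bar>l - p\<bar> \<le> dist (l, r) (p, p)" "\<bar>r - p\<bar> \<le> dist (l, r) (p, p)"
    using dist_fst_le[of "(l, r)" "(p, p)"] dist_snd_le[of "(l, r)" "(p, p)"]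
    by (simp_all add: dist_real_def)
  then show ?thesis by linarith
qed

lemma logistic_explicit_solution:
  fixes k c s t :: real
  assumes "k > 0" "c \<ge> 0" "s > 0" "t \<ge> 0"
  defines "\<sigma> \<equiv> \<lambda>t. 1 / (c / k + (1 / s - c / k) * exp (- k * t))"
  shows "(\<sigma> has_real_derivative \<sigma> t * (k - c * \<sigma> t)) (at t)"
proof -
  define g where "g = (\<lambda>t. c / k + (1 / s - c / k) * exp (- k * t))"
  have \<sigma>_eq: "\<sigma> = (\<lambda>t. 1 / g t)" by (simp add: \<sigma>_def g_def)
  have "g t = c / k * (1 - exp (- k * t)) + exp (- k * t) / s"
    by (simp add: g_def algebra_simps)
  moreover have "c / k * (1 - exp (- k * t)) \<ge> 0" using assms by simp
  moreover have "exp (- k * t) / s > 0" using assms by simp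
  ultimately have "g t > 0" by linarith
  have "(g has_real_derivative - k * (g t - c / k)) (at t)"
    unfolding g_def by (auto intro!: derivative_eq_intros)
  then have "(\<sigma> has_real_derivative (0 * g t - 1 * (- k * (g t - c / k))) / (g t * g t)) (at t)"
    unfolding \<sigma>_eq using \<open>g t > 0\<close> by (intro DERIV_divide DERIV_const) auto
  then show ?thesis
    by (rule DERIV_cong) (use \<open>g t > 0\<close> \<open>k > 0\<close> in \<open>simp add: \<sigma>_eq field_simps\<close>)
qed

lemma tendsto_origin_components:
  fixes x :: "'a \<Rightarrow> real \<times> real"
  assumes "(x \<longlongrightarrow> (0, 0)) F"
  shows "((\<lambda>t. fst (x t)) \<longlongrightarrow> 0) F \<and> ((\<lambda>t. snd (x t)) \<longlongrightarrow> 0) F \<and>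
    ((\<lambda>t. 1 - fst (x t) - snd (x t)) \<longlongrightarrow> 1) F"
proof -
  have "((\<lambda>t. fst (x t)) \<longlongrightarrow> 0) F" "((\<lambda>t. snd (x t)) \<longlongrightarrow> 0) F"
    using tendsto_fst[OF assms] tendsto_snd[OF assms] by simp_all
  moreover from this have "((\<lambda>t. 1 - fst (x t) - snd (x t)) \<longlongrightarrow> 1 - 0 - 0) F"
    by (intro tendsto_intros)
  ultimately show ?thesis by simp
qed

lemma vf_sum:
  "fst (vf \<alpha> \<mu> \<gamma> p) + snd (vf \<alpha> \<mu> \<gamma> p) = (fst p + snd p) * (\<alpha> + \<gamma> - \<mu> - (\<alpha> + \<gamma>) * (fst p + snd p))"
  by (simp add: vf_def Let_def algebra_simps)

lemma vf_diff:
  "fst (vf \<alpha> \<mu> \<gamma> p) - snd (vf \<alpha> \<mu> \<gamma> p) = (fst p - snd p) * ((\<alpha> - \<gamma>) * (1 - fst p - snd p) - \<mu>)"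
  by (simp add: vf_def Let_def algebra_simps)

lemma origin_not_in_interior_simplex: "(0, 0) \<notin> interior Sigma_simplex"
proof
  assume "(0, 0) \<in> interior Sigma_simplex"
  then obtain e where "e > 0" and ball: "ball (0, 0) e \<subseteq> Sigma_simplex"
    by (auto simp: mem_interior)
  have "(- e / 2, 0) \<in> ball (0, 0) e"
    using \<open>e > 0\<close> by (simp add: dist_Pair_Pair)
  with ball \<open>e > 0\<close> show False by (auto simp: Sigma_simplex_def)
qed

lemma open_triangle_subset_interior_simplex:
  "{p. 0 < fst p \<and> 0 < snd p \<and> fst p + snd p < 1} \<subseteq> interior Sigma_simplex"
proof (rule interior_maximal)
  show "open {p :: real \<times> real. 0 < fst p \<and> 0 < snd p \<and> fst p + snd p < 1}"
    by (intro open_Collect_conj open_Collect_less continuous_intros)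
qed (auto simp: Sigma_simplex_def)

locale positive_rates =
  fixes \<alpha> \<mu> \<gamma> :: real
  assumes \<alpha>_pos: "\<alpha> > 0" and \<mu>_pos: "\<mu> > 0" and \<gamma>_pos: "\<gamma> > 0"
begin

definition \<beta> where "\<beta> = \<alpha> + \<gamma>"
definition \<kappa> where "\<kappa> = \<beta> - \<mu>"
definition P where "P = (1 - \<mu> / \<beta>) / 2"

lemma \<beta>_pos: "\<beta> > 0"
  using \<alpha>_pos \<gamma>_pos by (simp add: \<beta>_def)

lemma \<kappa>_lt_\<beta>: "\<kappa> < \<beta>"
  using \<mu>_pos by (simp add: \<kappa>_def)

lemma two_P_eq: "2 * P = \<kappa> / \<beta>"
  using \<beta>_pos by (simp add: P_def \<kappa>_def field_simps)

lemma P_pos: "\<kappa> > 0 \<Longrightarrow> P > 0"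
proof -
  assume "\<kappa> > 0"
  with \<beta>_pos have "2 * P > 0" unfolding two_P_eq by simp
  then show ?thesis by simp
qed

lemma two_P_lt_1: "2 * P < 1"
  using two_P_eq \<kappa>_lt_\<beta> \<beta>_pos by (simp add: divide_less_eq_1)

end

locale simplex_solution = positive_rates +
  fixes x :: "real \<Rightarrow> real \<times> real"
  assumes solution: "is_solution \<alpha> \<mu> \<gamma> x" and initial: "x 0 \<in> Sigma_simplex"
begin

definition S where "S t = fst (x t) + snd (x t)"
definition D where "D t = fst (x t) - snd (x t)"
abbreviation q where "q t \<equiv> D t / S t"

lemma x_has_derivative: "t \<ge> 0 \<Longrightarrow> (x has_vector_derivative vf \<alpha> \<mu> \<gamma> (x t)) (at t within {0..})"
  using solution unfolding is_solution_def by blast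

lemma S_has_derivative: "t \<ge> 0 \<Longrightarrow> (S has_real_derivative S t * (\<kappa> - \<beta> * S t)) (at t within {0..})"
  using DERIV_add[OF has_real_derivative_fst has_real_derivative_snd, OF x_has_derivative x_has_derivative]
  by (simp add: vf_sum S_def[abs_def] \<kappa>_def \<beta>_def)

lemma D_has_derivative:
  "t \<ge> 0 \<Longrightarrow> (D has_real_derivative D t * ((\<alpha> - \<gamma>) * (1 - S t) - \<mu>)) (at t within {0..})"
  using DERIV_diff[OF has_real_derivative_fst has_real_derivative_snd, OF x_has_derivative x_has_derivative]
  by (simp add: vf_diff diff_diff_eq S_def D_def[abs_def])

lemma continuous_on_S: "continuous_on {0..} S"
  by (rule DERIV_continuous_on[OF S_has_derivative]) simp

lemma initial_bounds: "\<bar>D 0\<bar> \<le> S 0" "S 0 \<le> 1"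
  using initial by (auto simp: Sigma_simplex_def S_def D_def split: prod.splits)

lemma S_exp_integral: "t \<ge> 0 \<Longrightarrow> S t = S 0 * exp (integral {0..t} (\<lambda>s. \<kappa> - \<beta> * S s))"
  by (rule linear_ode_exp_integral[OF S_has_derivative]) (auto intro!: continuous_intros continuous_on_S)

lemma D_exp_integral: "t \<ge> 0 \<Longrightarrow> D t = D 0 * exp (integral {0..t} (\<lambda>s. (\<alpha> - \<gamma>) * (1 - S s) - \<mu>))"
  by (rule linear_ode_exp_integral[OF D_has_derivative]) (auto intro!: continuous_intros continuous_on_S)

lemma S_pos: "S 0 > 0 \<Longrightarrow> t \<ge> 0 \<Longrightarrow> S t > 0"
  using S_exp_integral[of t] by simp

lemma stays_at_origin: "S 0 = 0 \<Longrightarrow> t \<ge> 0 \<Longrightarrow> x t = (0, 0)"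
  using S_exp_integral[of t] D_exp_integral[of t] initial_bounds(1) by (simp add: prod_eq_iff S_def D_def)

context
  assumes S_0_pos: "S 0 > 0"
begin

lemma inverse_S_has_derivative:
  "t \<ge> 0 \<Longrightarrow> ((\<lambda>t. 1 / S t) has_real_derivative \<beta> - \<kappa> / S t) (at t within {0..})"
  using S_pos[OF S_0_pos, of t]
  by (auto intro!: derivative_eq_intros S_has_derivative simp: field_simps power2_eq_square)

lemma S_le_1: "t \<ge> 0 \<Longrightarrow> S t \<le> 1"
proof -
  assume "t \<ge> 0"
  have "1 / S t - 1 \<ge> 0"
  proof (rule affine_ode_nonneg[where f = "\<lambda>t. 1 / S t - 1" and g = "\<lambda>_. \<mu>" and c = \<kappa> and a = 0])
    fix s :: real assume "s \<ge> 0"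
    have "((\<lambda>t. 1 / S t - 1) has_real_derivative (\<beta> - \<kappa> / S s) - 0) (at s within {0..})"
      by (intro DERIV_diff inverse_S_has_derivative DERIV_const \<open>s \<ge> 0\<close>)
    then show "((\<lambda>t. 1 / S t - 1) has_real_derivative \<mu> - \<kappa> * (1 / S s - 1)) (at s within {0..})"
      by (rule DERIV_cong) (simp add: \<kappa>_def algebra_simps)
  qed (use \<mu>_pos initial_bounds S_0_pos \<open>t \<ge> 0\<close> in auto)
  with S_pos[OF S_0_pos \<open>t \<ge> 0\<close>] show ?thesis by (simp add: field_simps)
qed

lemma q_has_derivative:
  "t \<ge> 0 \<Longrightarrow> (q has_real_derivative q t * (- 2 * \<gamma> * (1 - S t))) (at t within {0..})"
proof -
  assume "t \<ge> 0"
  then have "S t > 0" by (rule S_pos[OF S_0_pos])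
  have "(q has_real_derivative
      (D t * ((\<alpha> - \<gamma>) * (1 - S t) - \<mu>) * S t - D t * (S t * (\<kappa> - \<beta> * S t))) / (S t * S t))
      (at t within {0..})"
    using \<open>S t > 0\<close> by (intro DERIV_divide D_has_derivative S_has_derivative \<open>t \<ge> 0\<close>) simp
  then show ?thesis
    by (rule DERIV_cong) (use \<open>S t > 0\<close> in \<open>simp add: \<kappa>_def \<beta>_def field_simps\<close>)
qed

lemma abs_q_le: "t \<ge> 0 \<Longrightarrow> \<bar>q t\<bar> \<le> \<bar>q 0\<bar>"
proof (rule linear_ode_abs_le[OF q_has_derivative])
  show "- 2 * \<gamma> * (1 - S s) \<le> 0" if "s \<ge> 0" for s
    using S_le_1[OF that] \<gamma>_pos by simp
qed (auto intro!: continuous_intros continuous_on_S)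

lemma abs_D_times_S_0_le: "t \<ge> 0 \<Longrightarrow> \<bar>D t\<bar> * S 0 \<le> \<bar>D 0\<bar> * S t"
proof -
  assume "t \<ge> 0"
  with S_pos[OF S_0_pos] have "S t > 0" by blast
  have "\<bar>D t\<bar> / S t \<le> \<bar>D 0\<bar> / S 0"
    using abs_q_le[OF \<open>t \<ge> 0\<close>] \<open>S t > 0\<close> S_0_pos by (simp add: abs_divide)
  with \<open>S t > 0\<close> S_0_pos show ?thesis by (simp add: field_simps)
qed

end

lemma S_0_eq_0_iff: "S 0 = 0 \<longleftrightarrow> x 0 = (0, 0)"
  using initial_bounds(1) by (auto simp: S_def D_def prod_eq_iff)

lemma in_simplex:
  assumes "t \<ge> 0" shows "x t \<in> Sigma_simplex"
proof (cases "S 0 = 0")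
  case True
  then show ?thesis using assms by (simp add: stays_at_origin[OF True] Sigma_simplex_def)
next
  case False
  then have "S 0 > 0" using initial_bounds(1) by linarith
  have "\<bar>D 0\<bar> * S t \<le> S 0 * S t"
    using initial_bounds(1) S_pos[OF \<open>S 0 > 0\<close> assms] by (intro mult_right_mono) auto
  with abs_D_times_S_0_le[OF \<open>S 0 > 0\<close> assms] have "\<bar>D t\<bar> * S 0 \<le> S t * S 0"
    by (metis mult.commute order_trans)
  then have "\<bar>D t\<bar> \<le> S t" using \<open>S 0 > 0\<close> by (rule mult_right_le_imp_le)
  moreover obtain l r where xt: "x t = (l, r)" by (cases "x t")
  ultimately have "\<bar>l - r\<bar> \<le> l + r" "l + r \<le> 1"
    using S_le_1[OF \<open>S 0 > 0\<close> assms] by (simp_all add: xt S_def D_def)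
  then show ?thesis by (auto simp: xt Sigma_simplex_def abs_le_iff)
qed

lemma dist_origin_le_S: "t \<ge> 0 \<Longrightarrow> dist (x t) (0, 0) \<le> S t"
  using in_simplex[of t] norm_Pair_le[of "fst (x t)" "snd (x t)"]
  by (auto simp: Sigma_simplex_def S_def dist_norm split: prod.splits)

lemma S_le_inverse_linear:
  assumes "\<kappa> \<le> 0" "S 0 > 0" "t \<ge> 0"
  shows "S t \<le> 1 / (1 / S 0 + \<beta> * t)"
proof -
  have "1 / S t \<ge> 1 / S 0 + \<beta> * (t - 0)"
  proof (rule has_real_derivative_ge_imp_ge[where f = "\<lambda>t. 1 / S t"])
    fix s :: real assume "s \<ge> 0"
    show "((\<lambda>t. 1 / S t) has_real_derivative \<beta> - \<kappa> / S s) (at s within {0..})"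
      by (rule inverse_S_has_derivative[OF \<open>S 0 > 0\<close> \<open>s \<ge> 0\<close>])
    show "\<beta> - \<kappa> / S s \<ge> \<beta>"
      using \<open>\<kappa> \<le> 0\<close> S_pos[OF \<open>S 0 > 0\<close> \<open>s \<ge> 0\<close>] by (simp add: divide_nonpos_pos)
  qed (use \<open>t \<ge> 0\<close> in auto)
  moreover have "1 / S 0 + \<beta> * t > 0"
    using \<open>S 0 > 0\<close> \<beta>_pos \<open>t \<ge> 0\<close> by (simp add: add_pos_nonneg)
  ultimately show ?thesis
    using S_pos[OF \<open>S 0 > 0\<close> \<open>t \<ge> 0\<close>] by (simp add: le_divide_eq field_simps)
qed

lemma S_le_initial: "\<kappa> \<le> 0 \<Longrightarrow> t \<ge> 0 \<Longrightarrow> S t \<le> S 0"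
proof (cases "S 0 = 0")
  case False
  assume "\<kappa> \<le> 0" "t \<ge> 0"
  have "S 0 > 0" using False initial_bounds(1) by linarith
  have "1 / (1 / S 0 + \<beta> * t) \<le> 1 / (1 / S 0)"
    using \<open>S 0 > 0\<close> \<beta>_pos \<open>t \<ge> 0\<close> by (intro frac_le) auto
  with S_le_inverse_linear[OF \<open>\<kappa> \<le> 0\<close> \<open>S 0 > 0\<close> \<open>t \<ge> 0\<close>] show ?thesis by simp
next
  case True
  then show "t \<ge> 0 \<Longrightarrow> S t \<le> S 0" by (simp add: stays_at_origin[OF True] S_def)
qed

lemma S_tendsto_0: "\<kappa> \<le> 0 \<Longrightarrow> (S \<longlongrightarrow> 0) at_top"
proof (cases "S 0 = 0")
  case True
  have "\<forall>\<^sub>F t in at_top. S t = 0"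
    using eventually_ge_at_top[of 0]
    by eventually_elim (simp add: stays_at_origin[OF True] S_def)
  then show ?thesis by (rule tendsto_eventually)
next
  case False
  assume "\<kappa> \<le> 0"
  have "S 0 > 0" using False initial_bounds(1) by linarith
  have "filterlim (\<lambda>t. \<beta> * t) at_top at_top"
    using \<beta>_pos by (rule filterlim_tendsto_pos_mult_at_top[OF tendsto_const _ filterlim_ident])
  then have "filterlim (\<lambda>t. 1 / S 0 + \<beta> * t) at_infinity at_top"
    by (rule filterlim_at_top_imp_at_infinity[OF filterlim_tendsto_add_at_top[OF tendsto_const]])
  then have lim: "((\<lambda>t. 1 / (1 / S 0 + \<beta> * t)) \<longlongrightarrow> 0) at_top"
    by (rule tendsto_divide_0[OF tendsto_const])
  have lower: "\<forall>\<^sub>F t in at_top. 0 \<le> S t"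
    using eventually_ge_at_top[of 0]
    by eventually_elim (use S_pos[OF \<open>S 0 > 0\<close>] in \<open>simp add: less_imp_le\<close>)
  have upper: "\<forall>\<^sub>F t in at_top. S t \<le> 1 / (1 / S 0 + \<beta> * t)"
    using eventually_ge_at_top[of 0]
    by eventually_elim (rule S_le_inverse_linear[OF \<open>\<kappa> \<le> 0\<close> \<open>S 0 > 0\<close>])
  show ?thesis by (rule tendsto_sandwich[OF lower upper tendsto_const lim])
qed

lemma tendsto_origin: "\<kappa> \<le> 0 \<Longrightarrow> (x \<longlongrightarrow> (0, 0)) at_top"
proof (rule metric_tendsto_imp_tendsto[OF S_tendsto_0])
  show "\<forall>\<^sub>F t in at_top. dist (x t) (0, 0) \<le> dist (S t) 0"
    using eventually_ge_at_top[of 0]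
  proof eventually_elim
    case (elim t)
    show ?case using dist_origin_le_S[OF elim] abs_ge_self[of "S t"] by (simp add: dist_real_def)
  qed
qed

context
  assumes \<kappa>_pos: "\<kappa> > 0" and S_0_pos: "S 0 > 0"
begin

abbreviation W where "W t \<equiv> 1 / S t - \<beta> / \<kappa>"

lemma W_has_derivative: "t \<ge> 0 \<Longrightarrow> (W has_real_derivative W t * (- \<kappa>)) (at t within {0..})"
proof -
  assume "t \<ge> 0"
  have "(W has_real_derivative (\<beta> - \<kappa> / S t) - 0) (at t within {0..})"
    by (intro DERIV_diff inverse_S_has_derivative[OF S_0_pos] DERIV_const \<open>t \<ge> 0\<close>)
  then show ?thesis by (rule DERIV_cong) (use \<kappa>_pos in \<open>simp add: field_simps\<close>)
qed

lemma abs_S_minus_eq: "t \<ge> 0 \<Longrightarrow> \<bar>S t - \<kappa> / \<beta>\<bar> = \<bar>W t\<bar> * S t * (\<kappa> / \<beta>)"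
proof -
  assume "t \<ge> 0"
  then have "S t > 0" by (rule S_pos[OF S_0_pos])
  then have "S t - \<kappa> / \<beta> = - W t * S t * (\<kappa> / \<beta>)"
    using \<kappa>_pos \<beta>_pos by (simp add: field_simps)
  then show ?thesis
    using \<open>S t > 0\<close> \<kappa>_pos \<beta>_pos by (simp add: abs_mult)
qed

lemma abs_S_minus_le: "t \<ge> 0 \<Longrightarrow> \<bar>S t - \<kappa> / \<beta>\<bar> \<le> \<bar>S 0 - \<kappa> / \<beta>\<bar> / S 0"
proof -
  assume "t \<ge> 0"
  have "\<bar>W t\<bar> \<le> \<bar>W 0\<bar>"
    by (rule linear_ode_abs_le[OF W_has_derivative]) (use \<kappa>_pos \<open>t \<ge> 0\<close> in auto)
  then have "\<bar>S t - \<kappa> / \<beta>\<bar> \<le> \<bar>W 0\<bar> * 1 * (\<kappa> / \<beta>)"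
    unfolding abs_S_minus_eq[OF \<open>t \<ge> 0\<close>]
    using S_le_1[OF S_0_pos \<open>t \<ge> 0\<close>] S_pos[OF S_0_pos \<open>t \<ge> 0\<close>] \<kappa>_pos \<beta>_pos
    by (intro mult_mono) auto
  also have "\<dots> = \<bar>S 0 - \<kappa> / \<beta>\<bar> / S 0"
    using abs_S_minus_eq[of 0] S_0_pos by simp
  finally show ?thesis .
qed

lemma S_tendsto: "(S \<longlongrightarrow> \<kappa> / \<beta>) at_top"
proof -
  have "(W \<longlongrightarrow> 0) at_top"
    by (rule linear_ode_tendsto_0[OF W_has_derivative, of \<kappa>]) (use \<kappa>_pos in auto)
  then have "((\<lambda>t. 1 / (W t + \<beta> / \<kappa>)) \<longlongrightarrow> 1 / (0 + \<beta> / \<kappa>)) at_top"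
    using \<kappa>_pos \<beta>_pos by (intro tendsto_intros) auto
  then have "((\<lambda>t. 1 / (W t + \<beta> / \<kappa>)) \<longlongrightarrow> \<kappa> / \<beta>) at_top" by simp
  moreover have "\<forall>\<^sub>F t in at_top. 1 / (W t + \<beta> / \<kappa>) = S t"
    using eventually_ge_at_top[of 0] by eventually_elim simp
  ultimately show ?thesis by (simp add: tendsto_cong)
qed

lemma q_tendsto_0: "(q \<longlongrightarrow> 0) at_top"
proof (rule linear_ode_tendsto_0[OF q_has_derivative[OF S_0_pos]])
  show "continuous_on {0..} (\<lambda>s. - 2 * \<gamma> * (1 - S s))"
    by (intro continuous_intros continuous_on_S)
  show "\<gamma> * \<mu> / \<beta> > 0" using \<gamma>_pos \<mu>_pos \<beta>_pos by simp
  have "\<kappa> / \<beta> < 1 - \<mu> / (2 * \<beta>)" using \<mu>_pos \<beta>_pos by (simp add: \<kappa>_def field_simps)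
  then have "\<forall>\<^sub>F s in at_top. S s < 1 - \<mu> / (2 * \<beta>)"
    by (rule order_tendstoD(2)[OF S_tendsto])
  then show "\<forall>\<^sub>F s in at_top. - 2 * \<gamma> * (1 - S s) \<le> - (\<gamma> * \<mu> / \<beta>)"
  proof eventually_elim
    case (elim s)
    then have "\<gamma> * (\<mu> / (2 * \<beta>)) \<le> \<gamma> * (1 - S s)"
      using \<gamma>_pos by (intro mult_left_mono) auto
    moreover have "\<gamma> * \<mu> / \<beta> = 2 * (\<gamma> * (\<mu> / (2 * \<beta>)))" by simp
    ultimately show ?case by linarith
  qed
qed simp

lemma D_tendsto_0: "(D \<longlongrightarrow> 0) at_top"
proof (rule Lim_null_comparison[OF _ tendsto_rabs_zero[OF q_tendsto_0]])
  show "\<forall>\<^sub>F t in at_top. norm (D t) \<le> \<bar>q t\<bar>"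
    using eventually_ge_at_top[of 0]
  proof eventually_elim
    case (elim t)
    with S_pos[OF S_0_pos] S_le_1[OF S_0_pos] have "0 < S t" "S t \<le> 1" by auto
    then have "\<bar>D t\<bar> = \<bar>q t\<bar> * S t" by simp
    also have "\<dots> \<le> \<bar>q t\<bar>" using \<open>S t \<le> 1\<close> by (rule mult_left_le) simp
    finally show ?case by simp
  qed
qed

lemma tendsto_coexistence: "(x \<longlongrightarrow> (P, P)) at_top"
proof -
  have "((\<lambda>t. ((S t + D t) / 2, (S t - D t) / 2)) \<longlongrightarrow> ((\<kappa> / \<beta> + 0) / 2, (\<kappa> / \<beta> - 0) / 2)) at_top"
    by (intro tendsto_intros S_tendsto D_tendsto_0) simp_all
  moreover have "(\<lambda>t. ((S t + D t) / 2, (S t - D t) / 2)) = x"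
    by (auto simp: S_def D_def prod_eq_iff)
  moreover have "P = \<kappa> / \<beta> / 2" using two_P_eq by simp
  ultimately show ?thesis by simp
qed

lemma abs_D_le_initial: "t \<ge> 0 \<Longrightarrow> \<bar>D t\<bar> \<le> \<bar>D 0\<bar> / S 0"
proof -
  assume "t \<ge> 0"
  have "\<bar>D 0\<bar> * S t \<le> \<bar>D 0\<bar> * 1"
    using S_le_1[OF S_0_pos \<open>t \<ge> 0\<close>] by (intro mult_left_mono) auto
  with abs_D_times_S_0_le[OF S_0_pos \<open>t \<ge> 0\<close>] have "\<bar>D t\<bar> * S 0 \<le> \<bar>D 0\<bar>" by linarith
  with S_0_pos show ?thesis by (simp add: le_divide_eq)
qed

lemma dist_coexistence_le:
  assumes "t \<ge> 0" shows "dist (x t) (P, P) \<le> (\<bar>S 0 - 2 * P\<bar> + \<bar>D 0\<bar>) / S 0"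
proof -
  have "dist (x t) (P, P) \<le> \<bar>S t - 2 * P\<bar> + \<bar>D t\<bar>"
    using dist_Pair_diagonal_le[of "fst (x t)" "snd (x t)" P] by (simp add: S_def D_def)
  also have "\<dots> \<le> \<bar>S 0 - 2 * P\<bar> / S 0 + \<bar>D 0\<bar> / S 0"
    using abs_S_minus_le[OF assms, folded two_P_eq] abs_D_le_initial[OF assms] by linarith
  finally show ?thesis by (simp add: add_divide_distrib)
qed

end

end

context positive_rates
begin

lemma vf_coexistence: "vf \<alpha> \<mu> \<gamma> (P, P) = 0"
proof -
  have "\<beta> * (1 - P - P) = \<mu>"
    using \<beta>_pos by (simp add: P_def field_simps)
  have "\<alpha> * P * (1 - P - P) - \<mu> * P + \<gamma> * P * (1 - P - P) = P * (\<beta> * (1 - P - P) - \<mu>)"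
    by (simp add: \<beta>_def algebra_simps)
  also have "\<dots> = 0" using \<open>\<beta> * (1 - P - P) = \<mu>\<close> by simp
  finally show ?thesis by (simp add: vf_def zero_prod_def)
qed

lemma vf_eq_0_in_simplex_iff:
  assumes "\<kappa> > 0" and "e \<in> Sigma_simplex"
  shows "vf \<alpha> \<mu> \<gamma> e = 0 \<longleftrightarrow> e = (0, 0) \<or> e = (P, P)"
proof
  obtain l r where e: "e = (l, r)" by (cases e)
  assume "vf \<alpha> \<mu> \<gamma> e = 0"
  then have sum: "(l + r) * (\<kappa> - \<beta> * (l + r)) = 0"
    and diff: "(l - r) * ((\<alpha> - \<gamma>) * (1 - l - r) - \<mu>) = 0"
    using vf_sum[of \<alpha> \<mu> \<gamma> e] vf_diff[of \<alpha> \<mu> \<gamma> e] by (simp_all add: e \<kappa>_def \<beta>_def)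
  show "e = (0, 0) \<or> e = (P, P)"
  proof (cases "l + r = 0")
    case True
    then show ?thesis using assms(2) by (simp add: e Sigma_simplex_def)
  next
    case False
    with sum have "\<kappa> - \<beta> * (l + r) = 0" by simp
    then have "l + r = \<kappa> / \<beta>"
      using \<beta>_pos by (simp add: field_simps)
    then have "1 - l - r = \<mu> / \<beta>"
      using \<beta>_pos by (simp add: \<kappa>_def field_simps)
    moreover have "(\<alpha> - \<gamma>) * (\<mu> / \<beta>) < \<beta> * (\<mu> / \<beta>)"
      using \<gamma>_pos \<mu>_pos \<beta>_pos by (intro mult_strict_right_mono) (simp_all add: \<beta>_def)
    ultimately have "(\<alpha> - \<gamma>) * (1 - l - r) - \<mu> \<noteq> 0"
      using \<beta>_pos by simp
    with diff have "l = r" by simp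
    with \<open>l + r = \<kappa> / \<beta>\<close> two_P_eq have "l = P" by simp
    with \<open>l = r\<close> show ?thesis by (simp add: e)
  qed
next
  show "e = (0, 0) \<or> e = (P, P) \<Longrightarrow> vf \<alpha> \<mu> \<gamma> e = 0"
    using vf_coexistence by (auto simp: vf_def zero_prod_def)
qed

lemma interior_equilibria:
  assumes "\<kappa> > 0"
  shows "{e \<in> interior Sigma_simplex. vf \<alpha> \<mu> \<gamma> e = 0} = {(P, P)}"
proof -
  have "(P, P) \<in> interior Sigma_simplex"
    using open_triangle_subset_interior_simplex P_pos[OF assms] two_P_lt_1 by auto
  with vf_eq_0_in_simplex_iff[OF assms] interior_subset[of Sigma_simplex]
    origin_not_in_interior_simplex show ?thesis
    by blast
qed

lemma stable_origin:
  assumes "\<kappa> \<le> 0"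
  shows "stable_on \<alpha> \<mu> \<gamma> Sigma_simplex (0, 0)"
  unfolding stable_on_def
proof (intro allI impI)
  fix \<epsilon> :: real
  assume "\<epsilon> > 0"
  show "\<exists>\<delta>>0. \<forall>x. is_solution \<alpha> \<mu> \<gamma> x \<and> x 0 \<in> Sigma_simplex \<and> dist (x 0) (0, 0) < \<delta> \<longrightarrow>
          (\<forall>t\<ge>0. dist (x t) (0, 0) < \<epsilon>)"
  proof (intro exI[of _ "\<epsilon> / 4"] conjI allI impI)
    fix x t
    assume x: "is_solution \<alpha> \<mu> \<gamma> x \<and> x 0 \<in> Sigma_simplex \<and> dist (x 0) (0, 0) < \<epsilon> / 4"
      and "t \<ge> (0::real)"
    interpret simplex_solution \<alpha> \<mu> \<gamma> x
      using x by unfold_locales auto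
    have "S 0 \<le> 4 * dist (x 0) (0, 0)"
      using sum_diff_le_dist_Pair_diagonal[of "fst (x 0)" "snd (x 0)" 0] by (simp add: S_def)
    with dist_origin_le_S[OF \<open>t \<ge> 0\<close>] S_le_initial[OF assms \<open>t \<ge> 0\<close>] x
    show "dist (x t) (0, 0) < \<epsilon>" by linarith
  qed (use \<open>\<epsilon> > 0\<close> in simp)
qed

lemma attractive_origin:
  assumes "\<kappa> \<le> 0"
  shows "attractive_on \<alpha> \<mu> \<gamma> Sigma_simplex (0, 0)"
  unfolding attractive_on_def
proof (intro allI impI)
  fix x
  assume "is_solution \<alpha> \<mu> \<gamma> x \<and> x 0 \<in> Sigma_simplex"
  then interpret simplex_solution \<alpha> \<mu> \<gamma> x by unfold_locales auto
  show "(x \<longlongrightarrow> (0, 0)) at_top" by (rule tendsto_origin[OF assms])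
qed

lemma GAS_origin: "\<kappa> \<le> 0 \<Longrightarrow> GAS_on \<alpha> \<mu> \<gamma> Sigma_simplex (0, 0)"
  using stable_origin attractive_origin by (simp add: GAS_on_def vf_def zero_prod_def)

lemma stable_coexistence:
  assumes "\<kappa> > 0"
  shows "stable_on \<alpha> \<mu> \<gamma> (Sigma_simplex - {(0, 0)}) (P, P)"
  unfolding stable_on_def
proof (intro allI impI)
  fix \<epsilon> :: real
  assume "\<epsilon> > 0"
  have "P > 0" using P_pos[OF assms] .
  define \<delta> where "\<delta> = min (P / 4) (\<epsilon> * P / 4)"
  show "\<exists>\<delta>>0. \<forall>x. is_solution \<alpha> \<mu> \<gamma> x \<and> x 0 \<in> Sigma_simplex - {(0, 0)} \<and> dist (x 0) (P, P) < \<delta> \<longrightarrow>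
          (\<forall>t\<ge>0. dist (x t) (P, P) < \<epsilon>)"
  proof (intro exI[of _ \<delta>] conjI allI impI)
    fix x t
    assume x: "is_solution \<alpha> \<mu> \<gamma> x \<and> x 0 \<in> Sigma_simplex - {(0, 0)} \<and> dist (x 0) (P, P) < \<delta>"
      and "t \<ge> (0::real)"
    interpret simplex_solution \<alpha> \<mu> \<gamma> x
      using x by unfold_locales auto
    have initial_dist: "\<bar>S 0 - 2 * P\<bar> + \<bar>D 0\<bar> \<le> 4 * dist (x 0) (P, P)"
      using sum_diff_le_dist_Pair_diagonal[of "fst (x 0)" "snd (x 0)" P] by (simp add: S_def D_def)
    moreover have "4 * dist (x 0) (P, P) < P" using x by (simp add: \<delta>_def)
    ultimately have "\<bar>S 0 - 2 * P\<bar> < P" by linarith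
    then have "S 0 \<ge> P" by (simp add: abs_less_iff)
    with \<open>P > 0\<close> have "S 0 > 0" by linarith
    have "dist (x t) (P, P) \<le> (\<bar>S 0 - 2 * P\<bar> + \<bar>D 0\<bar>) / S 0"
      by (rule dist_coexistence_le[OF assms \<open>S 0 > 0\<close> \<open>t \<ge> 0\<close>])
    also have "\<dots> \<le> 4 * dist (x 0) (P, P) / P"
      using initial_dist \<open>S 0 \<ge> P\<close> \<open>P > 0\<close> by (intro frac_le) auto
    also have "\<dots> < \<epsilon>"
      using x \<open>P > 0\<close> by (simp add: \<delta>_def field_simps)
    finally show "dist (x t) (P, P) < \<epsilon>" .
  qed (use \<open>\<epsilon> > 0\<close> \<open>P > 0\<close> in \<open>simp add: \<delta>_def\<close>)
qed

lemma attractive_coexistence: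
  assumes "\<kappa> > 0"
  shows "attractive_on \<alpha> \<mu> \<gamma> (Sigma_simplex - {(0, 0)}) (P, P)"
  unfolding attractive_on_def
proof (intro allI impI)
  fix x
  assume x: "is_solution \<alpha> \<mu> \<gamma> x \<and> x 0 \<in> Sigma_simplex - {(0, 0)}"
  then interpret simplex_solution \<alpha> \<mu> \<gamma> x by unfold_locales auto
  have "S 0 > 0"
    using x S_0_eq_0_iff initial_bounds(1) by force
  show "(x \<longlongrightarrow> (P, P)) at_top" by (rule tendsto_coexistence[OF assms \<open>S 0 > 0\<close>])
qed

lemma GAS_coexistence: "\<kappa> > 0 \<Longrightarrow> GAS_on \<alpha> \<mu> \<gamma> (Sigma_simplex - {(0, 0)}) (P, P)"
  using vf_coexistence stable_coexistence attractive_coexistence by (simp add: GAS_on_def)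

lemma diagonal_solution_exists:
  assumes "\<kappa> > 0" and "s > 0"
  shows "\<exists>x. is_solution \<alpha> \<mu> \<gamma> x \<and> x 0 = (s / 2, s / 2)"
proof -
  define \<sigma> where "\<sigma> = (\<lambda>t. 1 / (\<beta> / \<kappa> + (1 / s - \<beta> / \<kappa>) * exp (- \<kappa> * t)))"
  have "is_solution \<alpha> \<mu> \<gamma> (\<lambda>t. (\<sigma> t / 2, \<sigma> t / 2))"
    unfolding is_solution_def
  proof (intro allI impI)
    fix t :: real
    assume "t \<ge> 0"
    have "(\<sigma> has_real_derivative \<sigma> t * (\<kappa> - \<beta> * \<sigma> t)) (at t within {0..})"
      using logistic_explicit_solution[OF assms(1) less_imp_le[OF \<beta>_pos] assms(2) \<open>t \<ge> 0\<close>]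
      unfolding \<sigma>_def by (rule has_field_derivative_at_within)
    then have "((\<lambda>t. \<sigma> t / 2) has_vector_derivative \<sigma> t * (\<kappa> - \<beta> * \<sigma> t) / 2) (at t within {0..})"
      unfolding has_real_derivative_iff_has_vector_derivative[symmetric] by (rule DERIV_cdivide)
    moreover have "vf \<alpha> \<mu> \<gamma> (\<sigma> t / 2, \<sigma> t / 2) = (\<sigma> t * (\<kappa> - \<beta> * \<sigma> t) / 2, \<sigma> t * (\<kappa> - \<beta> * \<sigma> t) / 2)"
      by (simp add: vf_def \<kappa>_def \<beta>_def algebra_simps)
    ultimately show "((\<lambda>t. (\<sigma> t / 2, \<sigma> t / 2)) has_vector_derivative vf \<alpha> \<mu> \<gamma> (\<sigma> t / 2, \<sigma> t / 2))
        (at t within {0..})"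
      by (simp add: has_vector_derivative_Pair)
  qed
  moreover have "\<sigma> 0 = s" by (simp add: \<sigma>_def)
  ultimately show ?thesis by auto
qed

lemma origin_unstable:
  assumes "\<kappa> > 0"
  shows "\<not> stable_on \<alpha> \<mu> \<gamma> Sigma_simplex (0, 0)"
proof
  assume "stable_on \<alpha> \<mu> \<gamma> Sigma_simplex (0, 0)"
  moreover have "P / 2 > 0" using P_pos[OF assms] by simp
  ultimately obtain \<delta> where "\<delta> > 0" and stable:
    "\<forall>x. is_solution \<alpha> \<mu> \<gamma> x \<and> x 0 \<in> Sigma_simplex \<and> dist (x 0) (0, 0) < \<delta> \<longrightarrow>
       (\<forall>t\<ge>0. dist (x t) (0, 0) < P / 2)"
    unfolding stable_on_def by blast
  define s where "s = min \<delta> 1 / 2"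
  have "s > 0" "s < \<delta>" "s \<le> 1" using \<open>\<delta> > 0\<close> by (auto simp: s_def)
  obtain y where y: "is_solution \<alpha> \<mu> \<gamma> y" "y 0 = (s / 2, s / 2)"
    using diagonal_solution_exists[OF assms \<open>s > 0\<close>] by blast
  have y0: "y 0 \<in> Sigma_simplex - {(0, 0)}"
    using \<open>s > 0\<close> \<open>s \<le> 1\<close> by (simp add: y(2) Sigma_simplex_def)
  have "dist (y 0) (0, 0) < \<delta>"
    using dist_Pair_diagonal_le[of "s / 2" "s / 2" 0] \<open>s > 0\<close> \<open>s < \<delta>\<close> by (simp add: y(2))
  with stable y(1) y0 have small: "dist (y t) (0, 0) < P / 2" if "t \<ge> 0" for t
    using that by blast
  have "(y \<longlongrightarrow> (P, P)) at_top"
    using attractive_coexistence[OF assms] y(1) y0 by (simp add: attractive_on_def)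
  from tendsto_fst[OF this] have "((\<lambda>t. fst (y t)) \<longlongrightarrow> P) at_top" by simp
  then have "\<forall>\<^sub>F t in at_top. P / 2 < fst (y t)"
    using P_pos[OF assms] by (intro order_tendstoD(1)) auto
  moreover note eventually_ge_at_top[of "0 :: real"]
  ultimately have "\<forall>\<^sub>F t::real in at_top. False"
  proof eventually_elim
    case (elim t)
    with small[of t] dist_fst_le[of "y t" "(0, 0)"] show False by (simp add: dist_real_def)
  qed
  then show False by simp
qed

end

theorem theorem3p4:
  fixes \<alpha> \<mu> \<gamma> :: real
  assumes "\<alpha> > 0" and "\<mu> > 0" and "\<gamma> > 0"
  defines "\<beta> \<equiv> \<alpha> + \<gamma>"
  shows "(\<beta> \<le> \<mu> \<longrightarrow>
           GAS_on \<alpha> \<mu> \<gamma> Sigma_simplex (0, 0) \<and>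
           (\<forall>x. is_solution \<alpha> \<mu> \<gamma> x \<and> x 0 \<in> Sigma_simplex \<longrightarrow>
               ((\<lambda>t. fst (x t)) \<longlongrightarrow> 0) at_top \<and>
               ((\<lambda>t. snd (x t)) \<longlongrightarrow> 0) at_top \<and>
               ((\<lambda>t. 1 - fst (x t) - snd (x t)) \<longlongrightarrow> 1) at_top)) \<and>
         (\<beta> > \<mu> \<longrightarrow>
           (let P = (1 - \<mu> / \<beta>) / 2 in
              1 - 2 * P = \<mu> / \<beta> \<and>
              {e \<in> interior Sigma_simplex. vf \<alpha> \<mu> \<gamma> e = 0} = {(P, P)} \<and>
              GAS_on \<alpha> \<mu> \<gamma> (Sigma_simplex - {(0, 0)}) (P, P) \<and>
              \<not> stable_on \<alpha> \<mu> \<gamma> Sigma_simplex (0, 0)))"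
proof -
  have r: "positive_rates \<alpha> \<mu> \<gamma>" using assms by unfold_locales
  have \<kappa>: "positive_rates.\<kappa> \<alpha> \<mu> \<gamma> = \<beta> - \<mu>" and P: "positive_rates.P \<alpha> \<mu> \<gamma> = (1 - \<mu> / \<beta>) / 2"
    by (simp_all add: positive_rates.\<kappa>_def[OF r] positive_rates.\<beta>_def[OF r] positive_rates.P_def[OF r] \<beta>_def)
  have "GAS_on \<alpha> \<mu> \<gamma> Sigma_simplex (0, 0)" if "\<beta> \<le> \<mu>"
    using positive_rates.GAS_origin[OF r] that by (simp add: \<kappa>)
  moreover have
    "{e \<in> interior Sigma_simplex. vf \<alpha> \<mu> \<gamma> e = 0} = {((1 - \<mu> / \<beta>) / 2, (1 - \<mu> / \<beta>) / 2)} \<and>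
     GAS_on \<alpha> \<mu> \<gamma> (Sigma_simplex - {(0, 0)}) ((1 - \<mu> / \<beta>) / 2, (1 - \<mu> / \<beta>) / 2) \<and>
     \<not> stable_on \<alpha> \<mu> \<gamma> Sigma_simplex (0, 0)" if "\<beta> > \<mu>"
    using positive_rates.interior_equilibria[OF r] positive_rates.GAS_coexistence[OF r]
      positive_rates.origin_unstable[OF r] that
    by (simp add: \<kappa> P)
  moreover have "1 - 2 * ((1 - \<mu> / \<beta>) / 2) = \<mu> / \<beta>" by (simp add: diff_divide_distrib)
  ultimately show ?thesis
    unfolding Let_def GAS_on_def attractive_on_def using tendsto_origin_components by blast
qed

end
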